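(* For every even $m\ge4$ and every $i\in[1..f_m]$, the Fibonacci word satisfies $\mathsf{F}_m[i]=\mathtt{a}$ if $(1+i\cdot f_{m-2})\bmod f_m\le f_{m-1}$, and $\mathsf{F}_m[i]=\mathtt{b}$ otherwise.
   Context: Fibonacci words: $\mathsf{F}_1=\mathtt{b}$, $\mathsf{F}_2=\mathtt{a}$, $\mathsf{F}_m=\mathsf{F}_{m-1}\mathsf{F}_{m-2}$ (concatenation) for $m\ge3$; $f_m=|\mathsf{F}_m|$. Strings are indexed from 1. For integers $x$ and $n\ge1$, $x\bmod n$ denotes the representative of $x$ modulo $n$ in $[1..n]$ (so a multiple of $n$ maps to $n$). *)

theory Defs
  imports Main
begin

datatype letter = a | b

text \<open>Fibonacci words: F_1 = b, F_2 = a, F_m = F_(m-1) F_(m-2) for m >= 3.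
  F_0 is not used; it is set to the empty word.\<close>
fun fibword :: "nat \<Rightarrow> letter list" where
  "fibword 0 = []"
| "fibword (Suc 0) = [b]"
| "fibword (Suc (Suc 0)) = [a]"
| "fibword (Suc (Suc (Suc k))) = fibword (Suc (Suc k)) @ fibword (Suc k)"

definition flen :: "nat \<Rightarrow> nat" where
  "flen m = length (fibword m)"

definition mod1 :: "int \<Rightarrow> int \<Rightarrow> int" where
  "mod1 x n = ((x - 1) mod n) + 1"

definition charAt :: "letter list \<Rightarrow> nat \<Rightarrow> letter" where
  "charAt w i = w ! (i - 1)"

end

(* F_m is a mechanical word: the number of b's among its first k letters is
   floor(((k+1) f_(m-2) - [m odd]) / f_m).  By Cassini's identity the slopes f_(m-1)/f_(m+1) and
   f_(m-2)/f_m are both adjacent to f_m/f_(m+2), and the floors of t times two adjacent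
   fractions Q/N, Q'/N' (shifted by the right offsets) coincide for t <= N + 1, so the
   formula for F_(m+1) resp. F_m carries over to both halves of F_(m+2).  For even m the
   i-th letter is b exactly when this count jumps from k = i - 1 to k = i, i.e. when
   i f_(m-2) mod f_m + f_(m-2) >= f_m; since f_m = f_(m-1) + f_(m-2) this is the
   stated condition. *)

theory Submission
  imports Defs "HOL-Number_Theory.Fib"
begin

lemma flen_eq_fib: "flen m = fib m"
  by (induction m rule: fibword.induct) (simp_all add: flen_def)

lemma length_fibword: "length (fibword m) = fib m"
  using flen_eq_fib[of m] by (simp add: flen_def)

lemma count_b_fibword: "count_list (fibword (n + 2)) b = fib n"
  by (induction n rule: fib.induct) (simp_all add: eval_nat_numeral)

lemma minus_one_power_eq_parity: "(-1::int)^n = int (Suc n mod 2) - int (n mod 2)"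
  by (induction n) (auto simp: mod_Suc)

lemma fib_Cassini_parity:
  "int (fib (n + 2)) * int (fib (n + 3)) - int (fib (n + 1)) * int (fib (n + 4))
     = int (n mod 2) - int (Suc n mod 2)"
  "int (fib (n + 2)) * int (fib (n + 2)) - int (fib n) * int (fib (n + 4))
     = int (Suc n mod 2) - int (n mod 2)"
  using fib_Cassini_int[of n] minus_one_power_eq_parity[of n]
  by (simp_all add: eval_nat_numeral power2_eq_square algebra_simps)

lemma count_list_take_Suc:
  "i < length w \<Longrightarrow>
    count_list (take (Suc i) w) x = count_list (take i w) x + (if w ! i = x then 1 else 0)"
  by (simp add: take_Suc_conv_app_nth)

lemma div_add_eq_if:
  fixes x q N :: int
  assumes "0 < N" "0 \<le> q" "q \<le> N"
  shows "(x + q) div N = x div N + (if N \<le> x mod N + q then 1 else 0)"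
proof -
  have x: "x + q = N * (x div N) + (x mod N + q)" "0 \<le> x mod N" "x mod N < N"
    using assms(1) by simp_all
  show ?thesis
  proof (cases "N \<le> x mod N + q")
    case True
    have "x + q = N * (x div N + 1) + (x mod N + q - N)" using x(1) by (simp add: algebra_simps)
    then have "(x + q) div N = x div N + 1"
      by (rule int_div_pos_eq) (use True x(2,3) assms in linarith)+
    then show ?thesis using True by simp
  next
    case False
    have "(x + q) div N = x div N"
      by (rule int_div_pos_eq[OF x(1)]) (use False x(2,3) assms in linarith)+
    then show ?thesis using False by simp
  qed
qed

lemma adjacent_fractions_div_eq:
  fixes N N' Q Q' t d d' :: int
  assumes d: "d = 0 \<or> d = 1" "d + d' = 1" and det: "Q' * N - Q * N' = d' - d"
    and N: "0 < N" "N < N'" and t: "1 \<le> t" "t \<le> N + 1"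
  shows "(t * Q' - d') div N' = (t * Q - d) div N"
proof (rule int_div_pos_eq)
  define c s where "c = (t * Q - d) div N" and "s = (t * Q - d) mod N"
  have s: "0 \<le> s" "s < N" and tQ: "t * Q - d = N * c + s"
    using N(1) unfolding c_def s_def by simp_all
  define X where "X = t * Q' - d' - N' * c"
  have NX: "N * X = t * (d' - d) - d' * N + d * N' + N' * s"
    unfolding X_def using det tQ by algebra
  have "0 \<le> N * X \<and> N * X < N * N'"
    using d(1)
  proof (rule disjE)
    assume d0: "d = 0"
    have "0 \<le> t - N + N' * s"
    proof (cases "s = 0")
      case True
      then have "t = N * (t * Q' - c * N')" using det tQ d d0 by algebra
      then have "N dvd t" by (metis dvd_triv_left)
      then have "N \<le> t" using t(1) by (simp add: zdvd_imp_le)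
      then show ?thesis using True by simp
    next
      case False
      then have "N' \<le> N' * s" using s N by simp
      then show ?thesis using N t by linarith
    qed
    moreover have "N' * s \<le> N * N' - N'"
      using mult_left_mono[of s "N - 1" N'] s N by (simp add: algebra_simps)
    moreover have "N * X = t - N + N' * s" using NX d d0 by simp
    ultimately show "0 \<le> N * X \<and> N * X < N * N'" using N t by linarith
  next
    assume d1: "d = 1"
    have "N' \<le> N' * (s + 1)" "N' * (s + 1) \<le> N * N'"
      using s N mult_left_mono[of "s + 1" N N'] by (auto simp: mult.commute)
    moreover have "N * X = N' * (s + 1) - t" using NX d d1 by (simp add: algebra_simps)
    ultimately show "0 \<le> N * X \<and> N * X < N * N'" using N t by linarith
  qed
  then have "0 \<le> X" "X < N'" using N by (auto simp: zero_le_mult_iff mult_less_cancel_left)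
  then show "t * Q' - d' = N' * c + X" "0 \<le> X" "X < N'"
    unfolding X_def by simp_all
qed

lemma count_b_take_fibword_step:
  assumes IH_left: "\<And>k. k \<le> fib (n + 3) \<Longrightarrow>
      int (count_list (take k (fibword (n + 3))) b) =
      (int (k + 1) * int (fib (n + 1)) - int (Suc n mod 2)) div int (fib (n + 3))"
    and IH_right: "\<And>j. j \<le> fib (n + 2) \<Longrightarrow>
      int (count_list (take j (fibword (n + 2))) b) =
      (int (j + 1) * int (fib n) - int (n mod 2)) div int (fib (n + 2))"
    and k_le: "k \<le> fib (n + 4)"
  shows "int (count_list (take k (fibword (n + 4))) b) =
      (int (k + 1) * int (fib (n + 2)) - int (n mod 2)) div int (fib (n + 4))"
proof -
  have word: "fibword (n + 4) = fibword (n + 3) @ fibword (n + 2)"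
    by (simp add: eval_nat_numeral)
  have fib_rec: "fib (n + 4) = fib (n + 3) + fib (n + 2)" "fib (n + 3) = fib (n + 2) + fib (n + 1)"
    by (simp_all add: eval_nat_numeral)
  have pos: "0 < fib (n + 2)" "0 < fib (n + 3)" by (simp_all add: fib_neq_0_nat)
  have parity: "int (n mod 2) = 0 \<or> int (n mod 2) = 1"
    "int (Suc n mod 2) = 0 \<or> int (Suc n mod 2) = 1"
    "int (Suc n mod 2) + int (n mod 2) = 1" "int (n mod 2) + int (Suc n mod 2) = 1"
    by (auto simp: mod_Suc)
  show ?thesis
  proof (cases "k \<le> fib (n + 3)")
    case True
    then have "take k (fibword (n + 4)) = take k (fibword (n + 3))"
      by (simp add: word length_fibword)
    moreover have "(int (k + 1) * int (fib (n + 2)) - int (n mod 2)) div int (fib (n + 4)) =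
        (int (k + 1) * int (fib (n + 1)) - int (Suc n mod 2)) div int (fib (n + 3))"
      by (rule adjacent_fractions_div_eq[OF parity(2,3) fib_Cassini_parity(1)])
        (use True pos fib_rec in linarith)+
    ultimately show ?thesis using IH_left[OF True] by simp
  next
    case False
    define j where "j = k - fib (n + 3)"
    have k: "k = fib (n + 3) + j" and j: "j \<le> fib (n + 2)"
      using False k_le fib_rec unfolding j_def by simp_all
    have "take k (fibword (n + 4)) = fibword (n + 3) @ take j (fibword (n + 2))"
      by (simp add: word length_fibword k)
    then have "int (count_list (take k (fibword (n + 4))) b) =
        int (fib (n + 1)) + (int (j + 1) * int (fib n) - int (n mod 2)) div int (fib (n + 2))"
      using count_b_fibword[of "n + 1"] IH_right[OF j] by (simp add: eval_nat_numeral)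
    also have "\<dots> = int (fib (n + 1)) +
        (int (j + 1) * int (fib (n + 2)) - int (Suc n mod 2)) div int (fib (n + 4))"
      using adjacent_fractions_div_eq[OF parity(1,4) fib_Cassini_parity(2), of "int (j + 1)"]
        j pos fib_rec by linarith
    also have "\<dots> = (int (k + 1) * int (fib (n + 2)) - int (n mod 2)) div int (fib (n + 4))"
    proof -
      have "int (k + 1) * int (fib (n + 2)) - int (n mod 2) =
          (int (j + 1) * int (fib (n + 2)) - int (Suc n mod 2))
          + int (fib (n + 1)) * int (fib (n + 4))"
        using fib_Cassini_parity(1) parity(3) unfolding k by (simp add: algebra_simps)
      then show ?thesis using fib_neq_0_nat[of "n + 4"] by simp
    qed
    finally show ?thesis .
  qed
qed

lemma count_b_take_fibword:
  assumes "k \<le> fib (n + 2)"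
  shows "int (count_list (take k (fibword (n + 2))) b) =
           (int (k + 1) * int (fib n) - int (n mod 2)) div int (fib (n + 2))"
  using assms
proof (induction n arbitrary: k rule: fib.induct)
  case 1
  then have "k = 0 \<or> k = 1" by auto
  then show ?case by (auto simp: numeral_2_eq_2)
next
  case 2
  then have "k = 0 \<or> k = 1 \<or> k = 2" by (auto simp: eval_nat_numeral)
  then show ?case by (auto simp: eval_nat_numeral)
next
  case (3 n)
  have "int (count_list (take k (fibword (n + 4))) b) =
      (int (k + 1) * int (fib (n + 2)) - int (n mod 2)) div int (fib (n + 4))"
  proof (rule count_b_take_fibword_step)
    show "int (count_list (take k (fibword (n + 3))) b) =
        (int (k + 1) * int (fib (n + 1)) - int (Suc n mod 2)) div int (fib (n + 3))"
      if "k \<le> fib (n + 3)" for k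
      using "3.IH"(1)[of k] that by (simp add: eval_nat_numeral)
    show "int (count_list (take j (fibword (n + 2))) b) =
        (int (j + 1) * int (fib n) - int (n mod 2)) div int (fib (n + 2))"
      if "j \<le> fib (n + 2)" for j
      using "3.IH"(2)[of j] that by simp
    show "k \<le> fib (n + 4)" using "3.prems" by (simp add: eval_nat_numeral)
  qed
  moreover have "Suc (Suc n) + 2 = n + 4" "fib (Suc (Suc n)) = fib (n + 2)"
    "Suc (Suc n) mod 2 = n mod 2"
    by (simp_all add: eval_nat_numeral) presburger
  ultimately show ?case by (simp only:)
qed

lemma fibword_nth_eq_b_iff:
  assumes "even n" and "i < fib (n + 2)"
  shows "fibword (n + 2) ! i = b \<longleftrightarrow>
           int (fib (n + 2)) \<le> int (Suc i) * int (fib n) mod int (fib (n + 2)) + int (fib n)"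
proof -
  define N Q where "N = int (fib (n + 2))" and "Q = int (fib n)"
  have count: "int (count_list (take k (fibword (n + 2))) b) = int (k + 1) * Q div N"
    if "k \<le> fib (n + 2)" for k
    using count_b_take_fibword[OF that] assms(1) unfolding N_def Q_def by simp
  have N: "0 < N" "0 \<le> Q" "Q \<le> N"
    unfolding N_def Q_def using fib_neq_0_nat[of "n + 2"] fib_mono[of n "n + 2"] by auto
  have "int (count_list (take (Suc i) (fibword (n + 2))) b) =
      int (count_list (take i (fibword (n + 2))) b) + (if fibword (n + 2) ! i = b then 1 else 0)"
    using count_list_take_Suc[of i "fibword (n + 2)" b] assms(2) by (simp add: length_fibword)
  moreover have "int (Suc i + 1) * Q div N =
      int (Suc i) * Q div N + (if N \<le> int (Suc i) * Q mod N + Q then 1 else 0)"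
    using div_add_eq_if[OF N, of "int (Suc i) * Q"] by (simp add: algebra_simps)
  ultimately show ?thesis
    using count assms(2) unfolding N_def[symmetric] Q_def[symmetric] by (simp split: if_splits)
qed

theorem mainTheorem16:
  fixes m i :: nat
  assumes "even m" and "m \<ge> 4" and "1 \<le> i" and "i \<le> flen m"
  shows "charAt (fibword m) i =
           (if mod1 (1 + int i * int (flen (m - 2))) (int (flen m)) \<le> int (flen (m - 1))
            then a else b)"
proof -
  define n where "n = m - 2"
  have m: "m = n + 2" "m - 1 = n + 1" "m - 2 = n" and "even n"
    using assms(1,2) unfolding n_def by auto
  have i: "i = Suc (i - 1)" "i - 1 < fib (n + 2)"
    using assms(3,4) unfolding m flen_eq_fib by auto
  have "fibword (n + 2) ! (i - 1) = b \<longleftrightarrow>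
      int (fib (n + 2)) \<le> int i * int (fib n) mod int (fib (n + 2)) + int (fib n)"
    using fibword_nth_eq_b_iff[OF \<open>even n\<close> i(2)] i(1) by simp
  then show ?thesis
    unfolding charAt_def mod1_def m flen_eq_fib fib_plus_2
    by (cases "fibword (n + 2) ! (i - 1)") auto
qed

end
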